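(* Let $\beta>n$ and let $X$ be a random variable in $\mathbb{R}^n$ with density $f$ that is $-1/\beta$-concave. Then $$h(X)\le-\log\|f\|_\infty+\beta\sum_{i=1}^n(\beta-i)^{-1},$$ where $h(X)=-\int_{\mathbb{R}^n}f\log f\,dx$ and $\|f\|_\infty$ is the essential supremum of $f$. Equality holds when $X$ has a Pareto distribution with density $f(x)=Z_n(a,\beta)^{-1}(a+x_1+\cdots+x_n)^{-\beta}$ for $x_1,\dots,x_n>0$ (and $0$ otherwise), $a>0$, $Z_n(a,\beta)$ the normalizing constant.
   Context: A function $f:\mathbb{R}^n\to[0,\infty)$ is $-1/\beta$-concave ($\beta>0$) if $f((1-\lambda)x+\lambda y)\ge\big((1-\lambda)f(x)^{-1/\beta}+\lambda f(y)^{-1/\beta}\big)^{-\beta}$ for all $x,y$ with $f(x)f(y)>0$ and all $\lambda\in[0,1]$; equivalently $f^{-1/\beta}$ is convex on the support of $f$. *)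

theory Defs
  imports "HOL-Analysis.Analysis" "HOL-Probability.Essential_Supremum"
begin

definition neg_inv_concave :: "real \<Rightarrow> ('a::real_vector \<Rightarrow> real) \<Rightarrow> bool" where
  "neg_inv_concave \<beta> f \<longleftrightarrow> (\<forall>x. f x \<ge> 0) \<and>
     (\<forall>x y l. f x * f y > 0 \<longrightarrow> l \<in> {0..1} \<longrightarrow>
        f ((1 - l) *\<^sub>R x + l *\<^sub>R y) \<ge>
          ((1 - l) * f x powr (-1/\<beta>) + l * f y powr (-1/\<beta>)) powr (-\<beta>))"

definition is_density :: "('a::euclidean_space \<Rightarrow> real) \<Rightarrow> bool" where
  "is_density f \<longleftrightarrow> f \<in> borel_measurable lborel \<and> (\<forall>x. f x \<ge> 0) \<and>
     (\<integral>\<^sup>+ x. ennreal (f x) \<partial>lborel) = 1"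

text \<open>Differential entropy h = - integral of f log f (with 0 log 0 = 0).\<close>
definition diff_entropy :: "('a::euclidean_space \<Rightarrow> real) \<Rightarrow> real" where
  "diff_entropy f = - (\<integral>x. f x * ln (f x) \<partial>lborel)"

definition ess_sup_norm :: "('a::euclidean_space \<Rightarrow> real) \<Rightarrow> ereal" where
  "ess_sup_norm f = esssup lborel (\<lambda>x. ereal \<bar>f x\<bar>)"

definition pareto_unnorm :: "real \<Rightarrow> real \<Rightarrow> real^'n::finite \<Rightarrow> real" where
  "pareto_unnorm a \<beta> x = (if \<forall>i. x $ i > 0 then (a + (\<Sum>i\<in>UNIV. x $ i)) powr (-\<beta>) else 0)"

definition pareto_Z :: "real \<Rightarrow> real \<Rightarrow> 'n::finite itself \<Rightarrow> real" where
  "pareto_Z a \<beta> _ = (\<integral>x. (pareto_unnorm a \<beta> (x :: real^'n)) \<partial>lborel)"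

definition pareto_density :: "real \<Rightarrow> real \<Rightarrow> real^'n::finite \<Rightarrow> real" where
  "pareto_density a \<beta> x = pareto_unnorm a \<beta> x / pareto_Z a \<beta> TYPE('n)"

end

theory Submission
  imports Defs "HOL-Real_Asymp.Real_Asymp"
begin

text \<open>Write \<open>u = f powr (-1/\<beta>)\<close>, which is convex on the support of \<open>f\<close>, let \<open>m\<close> be its infimum,
  so that \<open>\<parallel>f\<parallel>\<^sub>\<infinity> = m powr (-\<beta>)\<close>, and let \<open>V s\<close> be the volume of \<open>{u \<le> s}\<close>. Dilating sublevel sets
  about points where \<open>u\<close> is almost minimal shows that \<open>V s / (s-m)^n\<close> is nonincreasing. By the
  layer-cake formula, \<open>\<integral>f = 1\<close> and \<open>h(f) + ln \<parallel>f\<parallel>\<^sub>\<infinity>\<close> are expressed (the latter affinely) through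
  the integrals of \<open>V\<close> against \<open>s powr (-\<beta>-1)\<close> and \<open>s powr (-\<beta>-1) ln (s/m)\<close> on \<open>[m, \<infinity>)\<close>. A Chebyshev-type rearrangement shows
  that, for fixed mass, the second integral is largest for the profile \<open>V s = K (s-m)^n\<close>, for which
  it is computed by repeated integration by parts; the Pareto density has exactly this profile.\<close>

section \<open>Tail integrals on the half-line\<close>

lemma nn_integral_sublevel_swap:
  fixes u :: "'a::euclidean_space \<Rightarrow> real" and \<rho> :: "'a \<Rightarrow> ennreal" and \<phi> :: "real \<Rightarrow> ennreal"
  assumes [measurable]: "u \<in> borel_measurable borel" "\<rho> \<in> borel_measurable borel" "\<phi> \<in> borel_measurable borel"
  shows "(\<integral>\<^sup>+x. \<rho> x * (\<integral>\<^sup>+s. \<phi> s * indicator {u x..} s \<partial>lborel) \<partial>lborel)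
       = (\<integral>\<^sup>+s. \<phi> s * (\<integral>\<^sup>+x. \<rho> x * indicator {x. u x \<le> s} x \<partial>lborel) \<partial>lborel)"
proof -
  have "(\<integral>\<^sup>+x. \<rho> x * (\<integral>\<^sup>+s. \<phi> s * indicator {u x..} s \<partial>lborel) \<partial>lborel)
      = (\<integral>\<^sup>+x. (\<integral>\<^sup>+s. \<rho> x * (\<phi> s * indicator {u x..} s) \<partial>lborel) \<partial>lborel)"
    by (intro nn_integral_cong) (simp add: nn_integral_cmult)
  also have "\<dots> = (\<integral>\<^sup>+s. (\<integral>\<^sup>+x. \<rho> x * (\<phi> s * indicator {u x..} s) \<partial>lborel) \<partial>lborel)"
  proof (rule lborel_pair.Fubini'[symmetric])
    have [measurable]: "Measurable.pred (borel \<Otimes>\<^sub>M borel) (\<lambda>x::'a\<times>real. snd x \<in> {u (fst x)..})"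
      by (simp only: atLeast_iff) measurable
    show "case_prod (\<lambda>x s. \<rho> x * (\<phi> s * indicator {u x..} s)) \<in> borel_measurable (lborel \<Otimes>\<^sub>M lborel)"
      by measurable
  qed
  also have "\<dots> = (\<integral>\<^sup>+s. \<phi> s * (\<integral>\<^sup>+x. \<rho> x * indicator {x. u x \<le> s} x \<partial>lborel) \<partial>lborel)"
    by (intro nn_integral_cong)
       (simp add: nn_integral_cmult[symmetric] mult_ac, intro nn_integral_cong, simp split: split_indicator)
  finally show ?thesis .
qed

definition tail_integral :: "real \<Rightarrow> real \<Rightarrow> (real \<Rightarrow> real) \<Rightarrow> ennreal" where
  "tail_integral t b g = (\<integral>\<^sup>+s. ennreal (s powr (-b-1) * g s) * indicator {t..} s \<partial>lborel)"

lemma tail_integral_cong: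
  "(\<And>s. t \<le> s \<Longrightarrow> g s = h s) \<Longrightarrow> tail_integral t b g = tail_integral t b h"
  unfolding tail_integral_def by (intro nn_integral_cong) (simp split: split_indicator)

lemma tail_integral_cmult:
  assumes "c \<ge> 0" "g \<in> borel_measurable borel"
  shows "tail_integral t b (\<lambda>s. c * g s) = ennreal c * tail_integral t b g"
  unfolding tail_integral_def using assms
  by (subst nn_integral_cmult[symmetric]) (auto intro!: nn_integral_cong simp: ennreal_mult' mult_ac)

lemma tail_integral_add:
  assumes "g \<in> borel_measurable borel" "h \<in> borel_measurable borel"
    and "\<And>s. t \<le> s \<Longrightarrow> 0 \<le> g s" "\<And>s. t \<le> s \<Longrightarrow> 0 \<le> h s"
  shows "tail_integral t b (\<lambda>s. g s + h s) = tail_integral t b g + tail_integral t b h"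
  unfolding tail_integral_def using assms
  by (subst nn_integral_add[symmetric])
     (auto intro!: nn_integral_cong simp: distrib_left split: split_indicator)

lemma tail_integral_shift:
  assumes "t > 0"
  shows "tail_integral t (b-1) (\<lambda>s. g s / s) = tail_integral t b g"
  unfolding tail_integral_def using assms
  by (intro nn_integral_cong) (auto split: split_indicator simp: powr_diff powr_minus field_simps)

lemma tail_integral_one:
  assumes "t > 0" "b > 0"
  shows "tail_integral t b (\<lambda>_. 1) = ennreal (t powr (-b) / b)"
proof -
  have "(\<integral>\<^sup>+s. ennreal (s powr (-b-1)) * indicator {t..} s \<partial>lborel) = ennreal (0 - (- (t powr (-b)) / b))"
  proof (rule nn_integral_FTC_atLeast)
    fix x assume "t \<le> x"
    then show "((\<lambda>s. - (s powr (-b)) / b) has_real_derivative x powr (-b-1)) (at x)"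
      using assms by (auto intro!: derivative_eq_intros simp: powr_diff field_simps powr_minus)
  next
    show "((\<lambda>s. - (s powr (-b)) / b) \<longlongrightarrow> 0) at_top"
      using assms by real_asymp
  qed auto
  then show ?thesis unfolding tail_integral_def by simp
qed

text \<open>Integration by parts: write \<open>G s\<close> as \<open>G t\<close> plus the integral of \<open>g\<close> over \<open>[t, s]\<close> and swap
  the two integrals.\<close>
lemma tail_integral_parts:
  assumes t: "t > 0" and b: "b > 0" and [measurable]: "g \<in> borel_measurable borel"
    and G: "\<And>s. t \<le> s \<Longrightarrow> (G has_real_derivative g s) (at s)"
    and g: "\<And>s. t \<le> s \<Longrightarrow> 0 \<le> g s" and Gt: "0 \<le> G t"
  shows "tail_integral t b G = ennreal (G t * t powr (-b) / b) + ennreal (1/b) * tail_integral t (b-1) g"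
proof -
  define \<phi> where "\<phi> s = ennreal (s powr (-b-1)) * indicator {t..} s" for s
  define \<rho> where "\<rho> s = ennreal (g s) * indicator {t..} s" for s
  have [measurable]: "\<phi> \<in> borel_measurable borel" "\<rho> \<in> borel_measurable borel"
    unfolding \<phi>_def \<rho>_def by measurable
  have FTC: "ennreal (G s - G t) = (\<integral>\<^sup>+r. \<rho> r * indicator {r. r \<le> s} r \<partial>lborel)" if "t \<le> s" for s
  proof -
    have "(\<integral>\<^sup>+r. \<rho> r * indicator {r. r \<le> s} r \<partial>lborel) = (\<integral>\<^sup>+r. ennreal (g r) * indicator {t..s} r \<partial>lborel)"
      unfolding \<rho>_def by (intro nn_integral_cong) (simp split: split_indicator)
    also have "\<dots> = ennreal (G s - G t)"
      using that G g by (intro nn_integral_FTC_Icc) auto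
    finally show ?thesis by simp
  qed
  have G_mono: "G t \<le> G s" if "t \<le> s" for s
  proof (rule DERIV_nonneg_imp_increasing_open[OF that])
    show "\<exists>y. (G has_real_derivative y) (at x) \<and> 0 \<le> y" if "t < x" for x
      using G g that by (meson less_imp_le)
    show "continuous_on {t..s} G"
      using G by (meson DERIV_isCont atLeastAtMost_iff continuous_at_imp_continuous_on)
  qed
  have "tail_integral t b G = (\<integral>\<^sup>+s. ennreal (G t) * \<phi> s + \<phi> s * (\<integral>\<^sup>+r. \<rho> r * indicator {r. r \<le> s} r \<partial>lborel) \<partial>lborel)"
    unfolding tail_integral_def
  proof (intro nn_integral_cong)
    fix s show "ennreal (s powr (-b-1) * G s) * indicator {t..} s
      = ennreal (G t) * \<phi> s + \<phi> s * (\<integral>\<^sup>+r. \<rho> r * indicator {r. r \<le> s} r \<partial>lborel)"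
    proof (cases "t \<le> s")
      case True
      have "ennreal (G s) = ennreal (G t) + ennreal (G s - G t)"
        using Gt G_mono[OF True] by (simp flip: ennreal_plus)
      then show ?thesis
        using True FTC[OF True] Gt G_mono[OF True] by (simp add: \<phi>_def ennreal_mult distrib_left mult_ac)
    qed (simp add: \<phi>_def)
  qed
  also have "\<dots> = ennreal (G t) * (\<integral>\<^sup>+s. \<phi> s \<partial>lborel)
      + (\<integral>\<^sup>+r. \<rho> r * (\<integral>\<^sup>+s. \<phi> s * indicator {r..} s \<partial>lborel) \<partial>lborel)"
    using nn_integral_sublevel_swap[of "\<lambda>r. r" \<rho> \<phi>] by (simp add: nn_integral_add nn_integral_cmult)
  also have "(\<integral>\<^sup>+s. \<phi> s \<partial>lborel) = ennreal (t powr (-b) / b)"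
    using tail_integral_one[OF t b] unfolding tail_integral_def \<phi>_def by simp
  also have "(\<integral>\<^sup>+r. \<rho> r * (\<integral>\<^sup>+s. \<phi> s * indicator {r..} s \<partial>lborel) \<partial>lborel)
      = (\<integral>\<^sup>+r. ennreal (1/b) * (ennreal (r powr (-(b-1)-1) * g r) * indicator {t..} r) \<partial>lborel)"
  proof (intro nn_integral_cong)
    fix r show "\<rho> r * (\<integral>\<^sup>+s. \<phi> s * indicator {r..} s \<partial>lborel)
      = ennreal (1/b) * (ennreal (r powr (-(b-1)-1) * g r) * indicator {t..} r)"
    proof (cases "t \<le> r")
      case True
      then have "(\<integral>\<^sup>+s. \<phi> s * indicator {r..} s \<partial>lborel) = tail_integral r b (\<lambda>_. 1)"
        unfolding \<phi>_def tail_integral_def by (intro nn_integral_cong) (simp split: split_indicator)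
      also have "\<dots> = ennreal (r powr (-b) / b)"
        using True t b by (intro tail_integral_one) auto
      finally show ?thesis
        using True t b g[OF True] by (simp add: \<rho>_def ennreal_mult[symmetric] field_simps)
    qed (simp add: \<rho>_def)
  qed
  also have "\<dots> = ennreal (1/b) * tail_integral t (b-1) g"
    unfolding tail_integral_def by (rule nn_integral_cmult) measurable
  finally show ?thesis
    using Gt t b by (simp add: ennreal_mult[symmetric] mult.commute)
qed

lemma tail_integral_power_Suc:
  assumes m: "m > 0" and b: "b > 0"
  shows "tail_integral m b (\<lambda>s. (s-m)^Suc n) = ennreal (real (Suc n) / b) * tail_integral m (b-1) (\<lambda>s. (s-m)^n)"
proof -
  have "tail_integral m b (\<lambda>s. (s-m)^Suc n) = ennreal (1/b) * tail_integral m (b-1) (\<lambda>s. real (Suc n) * (s-m)^n)"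
  proof (subst tail_integral_parts[OF m b])
    show "((\<lambda>s. (s-m)^Suc n) has_real_derivative real (Suc n) * (s-m)^n) (at s)" for s
      using DERIV_power_Suc[OF DERIV_diff[OF DERIV_ident DERIV_const[of m]]] by (simp add: algebra_simps)
  qed auto
  also have "\<dots> = ennreal (1/b) * ennreal (real (Suc n)) * tail_integral m (b-1) (\<lambda>s. (s-m)^n)"
    by (subst tail_integral_cmult) (auto simp: mult.assoc)
  also have "ennreal (1/b) * ennreal (real (Suc n)) = ennreal (real (Suc n) / b)"
    using b by (subst ennreal_mult[symmetric]) auto
  finally show ?thesis .
qed

lemma tail_integral_power:
  assumes m: "m > 0" and "real n < b"
  shows "tail_integral m b (\<lambda>s. (s-m)^n) = ennreal (fact n * m powr (real n - b) / (\<Prod>i\<le>n. (b - real i)))"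
  using assms(2)
proof (induction n arbitrary: b)
  case 0
  then show ?case using tail_integral_one[OF m, of b] by (simp add: powr_minus)
next
  case (Suc n)
  have b: "b > 0" using Suc.prems by simp
  have pos: "(\<Prod>i\<le>n. (b - 1 - real i)) > 0"
    using Suc.prems by (intro prod_pos) auto
  have prod: "(\<Prod>i\<le>Suc n. (b - real i)) = b * (\<Prod>i\<le>n. (b - 1 - real i))"
    by (subst prod.atMost_Suc_shift) (simp add: algebra_simps)
  have "tail_integral m b (\<lambda>s. (s-m)^Suc n)
      = ennreal (real (Suc n) / b) * ennreal (fact n * m powr (real n - (b-1)) / (\<Prod>i\<le>n. (b - 1 - real i)))"
    using tail_integral_power_Suc[OF m b] Suc by simp
  also have "\<dots> = ennreal (fact (Suc n) * m powr (real (Suc n) - b) / (\<Prod>i\<le>Suc n. (b - real i)))"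
    using b pos unfolding prod by (simp add: ennreal_mult[symmetric] field_simps)
  finally show ?case .
qed

lemma tail_integral_power_ln:
  assumes m: "m > 0" and "real n < b"
  shows "tail_integral m b (\<lambda>s. (s-m)^n * ln (s/m))
       = ennreal (\<Sum>i\<le>n. 1 / (b - real i)) * tail_integral m b (\<lambda>s. (s-m)^n)"
  using assms(2)
proof (induction n arbitrary: b)
  case 0
  then have b: "b > 0" by simp
  have "tail_integral m b (\<lambda>s. ln (s/m)) = ennreal (1/b) * tail_integral m (b-1) (\<lambda>s. 1 / s)"
  proof (subst tail_integral_parts[OF m b])
    show "((\<lambda>s. ln (s/m)) has_real_derivative 1 / s) (at s)" if "m \<le> s" for s
      using that m by (auto intro!: derivative_eq_intros simp: field_simps)
  qed (use m in auto)
  also have "tail_integral m (b-1) (\<lambda>s. 1 / s) = tail_integral m b (\<lambda>_. 1)"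
    using tail_integral_shift[OF m, of b "\<lambda>_. 1"] by simp
  finally show ?case by simp
next
  case (Suc n)
  have b: "b > 0" using Suc.prems by simp
  define c where "c = (\<Sum>i\<le>n. 1 / (b - 1 - real i))"
  have c: "c \<ge> 0" unfolding c_def using Suc.prems by (intro sum_nonneg) auto
  have "tail_integral m b (\<lambda>s. (s-m)^Suc n * ln (s/m))
      = ennreal (1/b) * tail_integral m (b-1) (\<lambda>s. real (Suc n) * ((s-m)^n * ln (s/m)) + (s-m)^Suc n / s)"
  proof (subst tail_integral_parts[OF m b])
    show "((\<lambda>s. (s-m)^Suc n * ln (s/m)) has_real_derivative
        real (Suc n) * ((s-m)^n * ln (s/m)) + (s-m)^Suc n / s) (at s)" if "m \<le> s" for s
    proof (rule DERIV_cong[OF DERIV_mult])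
      show "((\<lambda>s. (s-m)^Suc n) has_real_derivative real (Suc n) * (s-m)^n) (at s)"
        using DERIV_power_Suc[OF DERIV_diff[OF DERIV_ident DERIV_const[of m]]] by (simp add: algebra_simps)
      show "((\<lambda>s. ln (s/m)) has_real_derivative 1 / s) (at s)"
        using that m by (auto intro!: derivative_eq_intros simp: field_simps)
    qed (use that m in \<open>simp add: field_simps\<close>)
  qed (use m in auto)
  also have "\<dots> = ennreal (1/b) * (ennreal (real (Suc n)) * tail_integral m (b-1) (\<lambda>s. (s-m)^n * ln (s/m))
      + tail_integral m b (\<lambda>s. (s-m)^Suc n))"
    using m by (subst tail_integral_add) (auto simp: tail_integral_cmult tail_integral_shift)
  also have "tail_integral m (b-1) (\<lambda>s. (s-m)^n * ln (s/m)) = ennreal c * tail_integral m (b-1) (\<lambda>s. (s-m)^n)"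
    using Suc by (simp add: c_def)
  also have "ennreal (1/b) * (ennreal (real (Suc n)) * (ennreal c * tail_integral m (b-1) (\<lambda>s. (s-m)^n))
      + tail_integral m b (\<lambda>s. (s-m)^Suc n)) = ennreal (1/b + c) * tail_integral m b (\<lambda>s. (s-m)^Suc n)"
  proof -
    have ring: "a * (k * (x * T) + a * k * T) = (a + x) * (a * k * T)" for a k x T :: ennreal
      by (simp add: distrib_left distrib_right mult_ac add.commute)
    have "ennreal (real (Suc n) / b) = ennreal (1/b) * ennreal (real (Suc n))"
      using b by (subst ennreal_mult[symmetric]) auto
    moreover have "ennreal (1/b + c) = ennreal (1/b) + ennreal c"
      using b c by simp
    ultimately show ?thesis
      using ring tail_integral_power_Suc[OF m b, of n] by (simp only:)
  qed
  also have "1/b + c = (\<Sum>i\<le>Suc n. 1 / (b - real i))"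
    unfolding c_def by (subst sum.atMost_Suc_shift) (simp add: algebra_simps)
  finally show ?case .
qed

lemma mult_sum_inverse_diff:
  fixes \<beta> :: real
  assumes "\<beta> \<noteq> 0"
  shows "\<beta> * (\<Sum>i\<le>n. 1 / (\<beta> - real i)) - 1 = \<beta> * (\<Sum>i=1..n. 1 / (\<beta> - real i))"
  using assms unfolding atMost_atLeast0 by (subst sum.atLeast_Suc_atMost) (auto simp: distrib_left)

section \<open>A Chebyshev-type rearrangement bound\<close>

text \<open>If \<open>V s / (s-m)^n\<close> is nonincreasing, then \<open>V\<close> crosses a multiple \<open>\<psi> (s-m)^n\<close> of the
  extremal profile at \<open>s\<^sub>0 = m e\<^sup>c\<close>, which is where \<open>ln (s/m)\<close> crosses \<open>c\<close>; hence
  \<open>(ln (s/m) - c) (V s - \<psi> (s-m)^n) \<le> 0\<close>. After integration the \<open>\<psi>\<close>-terms cancel,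
  since \<open>c\<close> is exactly the ratio of the two tail integrals of the extremal profile.\<close>
lemma tail_integral_ln_le:
  fixes V :: "real \<Rightarrow> real"
  assumes m: "m > 0" and nb: "real n < b" and [measurable]: "V \<in> borel_measurable borel"
    and V_nonneg: "\<And>s. m < s \<Longrightarrow> 0 \<le> V s"
    and V_ratio: "\<And>s1 s2. m < s1 \<Longrightarrow> s1 \<le> s2 \<Longrightarrow> V s2 * (s1-m)^n \<le> V s1 * (s2-m)^n"
  shows "tail_integral m b (\<lambda>s. ln (s/m) * V s) \<le> ennreal (\<Sum>i\<le>n. 1 / (b - real i)) * tail_integral m b V"
proof -
  define c where "c = (\<Sum>i\<le>n. 1 / (b - real i))"
  have c: "c > 0" unfolding c_def using nb by (intro sum_pos) auto
  define s0 where "s0 = m * exp c"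
  have s0: "m < s0" unfolding s0_def using m c by simp
  define \<psi> where "\<psi> = V s0 / (s0 - m)^n"
  have \<psi>: "\<psi> \<ge> 0" unfolding \<psi>_def using V_nonneg s0 by simp
  have crossing: "(ln (s/m) - c) * (V s - \<psi> * (s-m)^n) \<le> 0" if s: "m < s" for s
  proof (cases "s0 \<le> s")
    case True
    then have "c \<le> ln (s/m)" using m s by (simp add: ln_ge_iff s0_def field_simps)
    moreover have "V s \<le> \<psi> * (s-m)^n"
      using V_ratio[OF s0 True] s0 unfolding \<psi>_def by (simp add: field_simps)
    ultimately show ?thesis by (simp add: mult_nonneg_nonpos)
  next
    case False
    then have "s/m \<le> exp c" using m by (simp add: s0_def field_simps)
    then have "ln (s/m) \<le> ln (exp c)" using m s by (subst ln_le_cancel_iff) auto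
    then have "ln (s/m) \<le> c" by simp
    moreover have "\<psi> * (s-m)^n \<le> V s"
      using V_ratio[OF s] False s0 unfolding \<psi>_def by (simp add: field_simps)
    ultimately show ?thesis by (simp add: mult_nonpos_nonneg)
  qed
  let ?w = "\<lambda>g s. ennreal (s powr (-b-1) * g s) * indicator {m..} s"
  have pointwise: "?w (\<lambda>s. ln (s/m) * V s) s + ennreal (\<psi> * c) * (?w (\<lambda>s. (s-m)^n) s)
      \<le> ennreal c * (?w V s) + ennreal \<psi> * (?w (\<lambda>s. (s-m)^n * ln (s/m)) s)"
    if "s \<noteq> m" for s
  proof (cases "m < s")
    case True
    have "s powr (-b-1) * ((ln (s/m) - c) * (V s - \<psi> * (s-m)^n)) \<le> 0"
      using crossing[OF True] by (simp add: mult_nonneg_nonpos)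
    then have "s powr (-b-1) * (ln (s/m) * V s) + \<psi> * c * (s powr (-b-1) * (s-m)^n)
        \<le> c * (s powr (-b-1) * V s) + \<psi> * (s powr (-b-1) * ((s-m)^n * ln (s/m)))"
      by (simp add: algebra_simps)
    then show ?thesis
      using True m c \<psi> V_nonneg[OF True]
      by (simp add: ennreal_mult[symmetric] ennreal_plus[symmetric] ennreal_leI del: ennreal_plus)
  qed (use that in simp)
  have "tail_integral m b (\<lambda>s. ln (s/m) * V s) + ennreal (\<psi> * c) * tail_integral m b (\<lambda>s. (s-m)^n)
      = (\<integral>\<^sup>+s. ?w (\<lambda>s. ln (s/m) * V s) s + ennreal (\<psi> * c) * (?w (\<lambda>s. (s-m)^n) s) \<partial>lborel)"
    unfolding tail_integral_def
    by (simp add: nn_integral_add nn_integral_cmult)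
  also have "\<dots> \<le> (\<integral>\<^sup>+s. ennreal c * (?w V s) + ennreal \<psi> * (?w (\<lambda>s. (s-m)^n * ln (s/m)) s) \<partial>lborel)"
    using AE_lborel_singleton[of m] by (intro nn_integral_mono_AE) (auto elim!: eventually_mono intro: pointwise)
  also have "\<dots> = ennreal c * tail_integral m b V + ennreal \<psi> * tail_integral m b (\<lambda>s. (s-m)^n * ln (s/m))"
    unfolding tail_integral_def
    by (simp add: nn_integral_add nn_integral_cmult)
  also have "\<dots> = ennreal c * tail_integral m b V + ennreal (\<psi> * c) * tail_integral m b (\<lambda>s. (s-m)^n)"
    unfolding tail_integral_power_ln[OF m nb] c_def[symmetric] using \<psi> c by (simp add: ennreal_mult mult_ac)
  finally have "ennreal (\<psi> * c) * tail_integral m b (\<lambda>s. (s-m)^n) + tail_integral m b (\<lambda>s. ln (s/m) * V s)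
      \<le> ennreal (\<psi> * c) * tail_integral m b (\<lambda>s. (s-m)^n) + ennreal c * tail_integral m b V"
    by (simp add: add.commute)
  then show ?thesis
    unfolding c_def[symmetric] using tail_integral_power[OF m nb]
    by (simp add: ennreal_add_left_cancel_le ennreal_mult_eq_top_iff)
qed

section \<open>Densities whose power \<open>-1/\<beta>\<close> is convex\<close>

lemma emeasure_lborel_affine_vimage:
  fixes B :: "'a::euclidean_space set"
  assumes B: "B \<in> sets borel" and c: "c \<noteq> 0"
  shows "emeasure lborel B = ennreal (\<bar>c\<bar> ^ DIM('a)) * emeasure lborel ((\<lambda>x. t + c *\<^sub>R x) -` B)"
proof -
  have "emeasure lborel B = emeasure (density (distr lborel borel (\<lambda>x. t + c *\<^sub>R x)) (\<lambda>_. ennreal (\<bar>c\<bar> ^ DIM('a)))) B"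
    using lborel_affine[OF c, of t] by simp
  also have "\<dots> = ennreal (\<bar>c\<bar> ^ DIM('a)) * emeasure lborel ((\<lambda>x. t + c *\<^sub>R x) -` B)"
    using B by (simp add: emeasure_density emeasure_distr nn_integral_cmult_indicator)
  finally show ?thesis .
qed

locale neg_inv_concave_density =
  fixes \<beta> :: real and f :: "'a::euclidean_space \<Rightarrow> real"
  assumes density: "is_density f" and concave: "neg_inv_concave \<beta> f" and dim_less: "real DIM('a) < \<beta>"
begin

definition u :: "'a \<Rightarrow> real" where "u x = f x powr (-1/\<beta>)"
definition sublevel :: "real \<Rightarrow> 'a set" where "sublevel s = {x. 0 < f x \<and> u x \<le> s}"
definition V :: "real \<Rightarrow> real" where "V s = measure lborel (sublevel s)"

lemma \<beta>_pos: "\<beta> > 0"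
  using dim_less by (metis of_nat_0_le_iff order.strict_trans1)

lemma f_measurable [measurable]: "f \<in> borel_measurable borel"
  using density unfolding is_density_def by simp

lemma f_nonneg: "0 \<le> f x"
  using density unfolding is_density_def by simp

lemma nn_integral_f: "(\<integral>\<^sup>+ x. ennreal (f x) \<partial>lborel) = 1"
  using density unfolding is_density_def by simp

lemma u_measurable [measurable]: "u \<in> borel_measurable borel"
  unfolding u_def by measurable

lemma sublevel_measurable [measurable]: "sublevel s \<in> sets borel"
  unfolding sublevel_def by measurable

lemma u_pos: "0 < f x \<Longrightarrow> 0 < u x"
  unfolding u_def by simp

lemma f_eq_u_powr: "0 < f x \<Longrightarrow> f x = u x powr (-\<beta>)"
  unfolding u_def using \<beta>_pos by (simp add: powr_powr)

lemma u_convex: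
  assumes x: "0 < f x" and y: "0 < f y" and l: "0 \<le> l" "l \<le> 1"
  shows "0 < f ((1-l) *\<^sub>R x + l *\<^sub>R y) \<and> u ((1-l) *\<^sub>R x + l *\<^sub>R y) \<le> (1-l) * u x + l * u y"
proof -
  define Q where "Q = (1-l) * u x + l * u y"
  have Q: "Q > 0" unfolding Q_def using u_pos[OF x] u_pos[OF y] l
    by (cases "l = 0") (auto intro: add_pos_nonneg add_nonneg_pos)
  have f_ge: "Q powr (-\<beta>) \<le> f ((1-l) *\<^sub>R x + l *\<^sub>R y)"
    using concave x y l unfolding neg_inv_concave_def Q_def u_def by auto
  moreover have "u ((1-l) *\<^sub>R x + l *\<^sub>R y) \<le> (Q powr (-\<beta>)) powr (-1/\<beta>)"
    unfolding u_def using f_ge Q \<beta>_pos by (intro powr_mono2') auto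
  moreover have "0 < f ((1-l) *\<^sub>R x + l *\<^sub>R y)"
    using f_ge Q powr_gt_zero[of Q "-\<beta>"] by linarith
  ultimately show ?thesis using \<beta>_pos Q unfolding Q_def by (simp add: powr_powr)
qed

lemma sublevel_empty: "s \<le> 0 \<Longrightarrow> sublevel s = {}"
  unfolding sublevel_def using u_pos by force

text \<open>Markov's inequality: \<open>f \<ge> s powr (-\<beta>)\<close> on \<open>sublevel s\<close>.\<close>
lemma emeasure_sublevel_le:
  assumes "s > 0"
  shows "emeasure lborel (sublevel s) \<le> ennreal (s powr \<beta>)"
proof -
  have "ennreal (s powr (-\<beta>)) * emeasure lborel (sublevel s)
      = (\<integral>\<^sup>+x. ennreal (s powr (-\<beta>)) * indicator (sublevel s) x \<partial>lborel)"
    by (simp add: nn_integral_cmult_indicator)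
  also have "\<dots> \<le> (\<integral>\<^sup>+ x. ennreal (f x) \<partial>lborel)"
  proof (intro nn_integral_mono)
    fix x show "ennreal (s powr (-\<beta>)) * indicator (sublevel s) x \<le> ennreal (f x)"
    proof (cases "x \<in> sublevel s")
      case True
      then have fx: "0 < f x" "u x \<le> s" unfolding sublevel_def by auto
      have "s powr (-\<beta>) \<le> u x powr (-\<beta>)"
        using fx u_pos[OF fx(1)] \<beta>_pos by (intro powr_mono2') auto
      then show ?thesis using True f_eq_u_powr[OF fx(1)] by (simp add: ennreal_leI)
    qed simp
  qed
  finally have "ennreal (s powr (-\<beta>)) * emeasure lborel (sublevel s) \<le> 1"
    by (simp add: nn_integral_f)
  then have "ennreal (s powr \<beta>) * (ennreal (s powr (-\<beta>)) * emeasure lborel (sublevel s)) \<le> ennreal (s powr \<beta>)"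
    by (metis mult.right_neutral mult_left_mono zero_le)
  then show ?thesis
    using assms by (simp add: mult.assoc[symmetric] ennreal_mult[symmetric] powr_add[symmetric])
qed

lemma emeasure_sublevel: "emeasure lborel (sublevel s) = ennreal (V s)"
proof -
  have "emeasure lborel (sublevel s) < \<infinity>"
    using emeasure_sublevel_le[of s] sublevel_empty[of s] by (cases "s > 0") (auto simp: le_less_trans)
  then show ?thesis unfolding V_def by (simp add: emeasure_eq_ennreal_measure less_top)
qed

lemma V_nonneg: "0 \<le> V s"
  unfolding V_def by simp

lemma V_le_powr: "s > 0 \<Longrightarrow> V s \<le> s powr \<beta>"
  using emeasure_sublevel_le[of s] by (simp add: emeasure_sublevel)

lemma V_mono: "mono V"
proof (rule monoI)
  fix s1 s2 :: real assume "s1 \<le> s2"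
  then have "emeasure lborel (sublevel s1) \<le> emeasure lborel (sublevel s2)"
    by (intro emeasure_mono) (auto simp: sublevel_def)
  then show "V s1 \<le> V s2" using V_nonneg by (simp add: emeasure_sublevel)
qed

text \<open>By convexity of \<open>u\<close>, the homothety with centre \<open>x\<^sub>0\<close> and ratio \<open>t\<close> maps \<open>sublevel r\<close> into a sublevel set.\<close>
lemma V_dilate:
  assumes x0: "0 < f x0" and t: "0 < t" "t \<le> 1"
  shows "t ^ DIM('a) * V r \<le> V ((1-t) * u x0 + t * r)"
proof -
  define r' where "r' = (1-t) * u x0 + t * r"
  have "sublevel r \<subseteq> (\<lambda>y. (1-t) *\<^sub>R x0 + t *\<^sub>R y) -` sublevel r'"
  proof
    fix y assume "y \<in> sublevel r"
    then have y: "0 < f y" "u y \<le> r" unfolding sublevel_def by auto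
    have "(1-t) * u x0 + t * u y \<le> r'" unfolding r'_def using y t by simp
    then show "y \<in> (\<lambda>y. (1-t) *\<^sub>R x0 + t *\<^sub>R y) -` sublevel r'"
      using u_convex[OF x0 y(1), of t] t unfolding sublevel_def by auto
  qed
  then have "emeasure lborel (sublevel r) \<le> emeasure lborel ((\<lambda>y. (1-t) *\<^sub>R x0 + t *\<^sub>R y) -` sublevel r')"
  proof (rule emeasure_mono)
    show "(\<lambda>y. (1-t) *\<^sub>R x0 + t *\<^sub>R y) -` sublevel r' \<in> sets lborel"
      unfolding sets_lborel by (rule measurable_sets_borel[OF _ sublevel_measurable]) measurable
  qed
  then have "ennreal (t ^ DIM('a)) * emeasure lborel (sublevel r) \<le> emeasure lborel (sublevel r')"
    using emeasure_lborel_affine_vimage[of "sublevel r'" t "(1-t) *\<^sub>R x0"] t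
    by (simp add: mult_left_mono)
  then show ?thesis
    using t V_nonneg unfolding r'_def by (simp add: emeasure_sublevel ennreal_mult[symmetric])
qed

definition m :: real where "m = Inf (u ` {x. 0 < f x})"

lemma V_pos_level: "\<exists>s>0. V s > 0"
proof (rule ccontr)
  assume "\<not> ?thesis"
  then have "V s = 0" if "s > 0" for s
    using that V_nonneg[of s] by (meson antisym not_le)
  then have "sublevel (real (Suc k)) \<in> null_sets lborel" for k
    by (simp add: null_sets_def emeasure_sublevel)
  then have "(\<Union>k. sublevel (real (Suc k))) \<in> null_sets lborel"
    by (rule null_sets_UN)
  moreover have "{x. 0 < f x} \<subseteq> (\<Union>k. sublevel (real (Suc k)))"
  proof
    fix x assume "x \<in> {x. 0 < f x}"
    moreover obtain k where "u x \<le> real k" using real_arch_simple by blast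
    ultimately have "x \<in> sublevel (real (Suc k))" unfolding sublevel_def by simp
    then show "x \<in> (\<Union>k. sublevel (real (Suc k)))" by blast
  qed
  ultimately have "AE x in lborel. \<not> 0 < f x"
    by (intro AE_I'[of "\<Union>k. sublevel (real (Suc k))"]) auto
  then have "AE x in lborel. ennreal (f x) = 0"
    by eventually_elim (use f_nonneg in \<open>auto intro: antisym\<close>)
  then have "(\<integral>\<^sup>+ x. ennreal (f x) \<partial>lborel) = 0"
    by (simp add: nn_integral_0_iff_AE)
  then show False using nn_integral_f by simp
qed

lemma support_nonempty: "\<exists>x. 0 < f x"
proof -
  obtain s where "V s > 0" using V_pos_level by blast
  then have "sublevel s \<noteq> {}" unfolding V_def by auto
  then show ?thesis unfolding sublevel_def by auto
qed

lemma bdd_below_u: "bdd_below (u ` {x. 0 < f x})"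
  by (rule bdd_belowI[where m=0]) (auto intro: less_imp_le u_pos)

lemma m_le_u: "0 < f x \<Longrightarrow> m \<le> u x"
  unfolding m_def by (rule cInf_lower[OF _ bdd_below_u]) simp

lemma m_nonneg: "m \<ge> 0"
  unfolding m_def using support_nonempty by (intro cInf_greatest) (auto intro: less_imp_le u_pos)

lemma exists_u_less: "\<epsilon> > 0 \<Longrightarrow> \<exists>x. 0 < f x \<and> u x < m + \<epsilon>"
  using cInf_less_iff[OF _ bdd_below_u, of "m + \<epsilon>"] support_nonempty unfolding m_def by auto

text \<open>\<open>V s / (s-m)^n\<close> is nonincreasing on \<open>(m, \<infinity>)\<close>: dilate \<open>sublevel s\<^sub>2\<close> with ratio
  \<open>q < (s\<^sub>1-m)/(s\<^sub>2-m)\<close> about a centre \<open>x\<^sub>0\<close> with \<open>u x\<^sub>0\<close> close enough to \<open>m\<close>, then let \<open>q\<close> tend to the ratio.\<close>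
lemma V_ratio:
  assumes s1: "m < s1" and s12: "s1 \<le> s2"
  shows "V s2 * (s1-m)^DIM('a) \<le> V s1 * (s2-m)^DIM('a)"
proof -
  define Q where "Q = (s1-m)/(s2-m)"
  have Q: "0 < Q" "Q \<le> 1" unfolding Q_def using s1 s12 by auto
  have step: "q ^ DIM('a) * V s2 \<le> V s1" if q: "0 < q" "q < Q" for q
  proof -
    define \<delta> where "\<delta> = (Q-q)*(s2-m)/(1-q)"
    have \<delta>: "\<delta> > 0" unfolding \<delta>_def using q Q s1 s12 by (auto intro!: divide_pos_pos mult_pos_pos)
    obtain x0 where x0: "0 < f x0" "u x0 < m + \<delta>" using exists_u_less[OF \<delta>] by blast
    have "(1-q) * u x0 + q * s2 \<le> (1-q) * (m + \<delta>) + q * s2"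
      using x0 q Q by (intro add_right_mono mult_left_mono) auto
    also have "(1-q) * (m + \<delta>) = (1-q) * m + (Q-q) * (s2-m)"
      unfolding \<delta>_def using q Q by (simp add: field_simps)
    also have "Q * (s2-m) = s1 - m"
      unfolding Q_def using s1 s12 by simp
    then have "(1-q) * m + (Q-q) * (s2-m) + q * s2 = s1"
      by (simp add: algebra_simps)
    finally have "(1-q) * u x0 + q * s2 \<le> s1" .
    then have "V ((1-q) * u x0 + q * s2) \<le> V s1" by (rule monoD[OF V_mono])
    moreover have "q ^ DIM('a) * V s2 \<le> V ((1-q) * u x0 + q * s2)"
      using V_dilate[OF x0(1), of q s2] q Q by simp
    ultimately show ?thesis by simp
  qed
  have "Q ^ DIM('a) * V s2 \<le> V s1"
  proof (rule tendsto_upperbound)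
    show "((\<lambda>q. q ^ DIM('a) * V s2) \<longlongrightarrow> Q ^ DIM('a) * V s2) (at_left Q)"
      by (intro tendsto_intros)
    show "\<forall>\<^sub>F q in at_left Q. q ^ DIM('a) * V s2 \<le> V s1"
      using eventually_at_left_real[OF Q(1)] by eventually_elim (auto intro: step)
  qed simp
  then show ?thesis using s1 s12 unfolding Q_def by (simp add: power_divide field_simps)
qed

text \<open>If \<open>m = 0\<close>, monotonicity of \<open>V s / s^n\<close> would force \<open>V s \<ge> K s^n\<close> near \<open>0\<close>, against \<open>V s \<le> s^\<beta>\<close> with \<open>\<beta> > n\<close>.\<close>
lemma m_pos: "m > 0"
proof (rule ccontr)
  assume "\<not> m > 0"
  then have m0: "m = 0" using m_nonneg by simp
  obtain s1 where s1: "s1 > 0" "V s1 > 0" using V_pos_level by blast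
  define K where "K = V s1 / s1 ^ DIM('a)"
  have K: "K > 0" unfolding K_def using s1 by simp
  have bound: "K \<le> s powr (\<beta> - real DIM('a))" if s: "0 < s" "s < s1" for s
  proof -
    have "V s1 * s ^ DIM('a) \<le> V s * s1 ^ DIM('a)" using V_ratio[of s s1] s m0 by simp
    also have "\<dots> \<le> s powr \<beta> * s1 ^ DIM('a)" using V_le_powr[of s] s by (intro mult_right_mono) auto
    also have "s powr \<beta> = s powr (\<beta> - real DIM('a)) * s ^ DIM('a)"
      using s by (simp add: powr_diff powr_realpow)
    finally show ?thesis unfolding K_def using s s1 by (simp add: field_simps)
  qed
  have "((\<lambda>s. s powr (\<beta> - real DIM('a))) \<longlongrightarrow> 0) (at_right 0)"
    using dim_less by real_asymp
  then have "\<forall>\<^sub>F s in at_right 0. s powr (\<beta> - real DIM('a)) < K" using K by (rule order_tendstoD)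
  moreover have "\<forall>\<^sub>F s in at_right 0. s \<in> {0<..<s1}" using eventually_at_right_real[OF s1(1)] .
  ultimately have "\<forall>\<^sub>F s in at_right (0::real). False"
    by eventually_elim (use bound in force)
  then show False by simp
qed

lemma V_pos: "m < s \<Longrightarrow> 0 < V s"
proof -
  assume s: "m < s"
  obtain s1 where s1: "s1 > 0" "V s1 > 0" using V_pos_level by blast
  show "0 < V s"
  proof (cases "s1 \<le> s")
    case True
    then show ?thesis using s1 V_mono[THEN monoD, OF True] by simp
  next
    case False
    then have "0 < V s1 * (s-m)^DIM('a)" using s1 s by simp
    also have "\<dots> \<le> V s * (s1-m)^DIM('a)" using V_ratio[OF s] False by simp
    finally show ?thesis using V_nonneg[of s] by (auto simp: zero_less_mult_iff)
  qed
qed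

lemma layer_cake:
  assumes [measurable]: "g \<in> borel_measurable borel" and g: "\<And>s. m \<le> s \<Longrightarrow> 0 \<le> g s"
  shows "(\<integral>\<^sup>+x. indicator {x. 0 < f x} x * tail_integral (u x) \<beta> g \<partial>lborel) = tail_integral m \<beta> (\<lambda>s. g s * V s)"
proof -
  define \<phi> where "\<phi> s = ennreal (s powr (-\<beta>-1) * g s) * indicator {m..} s" for s
  have [measurable]: "\<phi> \<in> borel_measurable borel" unfolding \<phi>_def by measurable
  have "tail_integral (u x) \<beta> g = (\<integral>\<^sup>+s. \<phi> s * indicator {u x..} s \<partial>lborel)" if "0 < f x" for x
    unfolding tail_integral_def \<phi>_def using m_le_u[OF that]
    by (intro nn_integral_cong) (simp split: split_indicator)
  then have "(\<integral>\<^sup>+x. indicator {x. 0 < f x} x * tail_integral (u x) \<beta> g \<partial>lborel)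
      = (\<integral>\<^sup>+x. indicator {x. 0 < f x} x * (\<integral>\<^sup>+s. \<phi> s * indicator {u x..} s \<partial>lborel) \<partial>lborel)"
    by (intro nn_integral_cong) (simp split: split_indicator)
  also have "\<dots> = (\<integral>\<^sup>+s. \<phi> s * (\<integral>\<^sup>+x. indicator {x. 0 < f x} x * indicator {x. u x \<le> s} x \<partial>lborel) \<partial>lborel)"
    by (rule nn_integral_sublevel_swap) measurable
  also have "\<dots> = (\<integral>\<^sup>+s. \<phi> s * ennreal (V s) \<partial>lborel)"
  proof (intro nn_integral_cong arg_cong2[where f="(*)"] refl)
    fix s
    have "(\<integral>\<^sup>+x. indicator {x. 0 < f x} x * indicator {x. u x \<le> s} x \<partial>lborel)
        = (\<integral>\<^sup>+x. indicator (sublevel s) x \<partial>lborel)"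
      by (intro nn_integral_cong) (simp add: sublevel_def split: split_indicator)
    then show "(\<integral>\<^sup>+x. indicator {x. 0 < f x} x * indicator {x. u x \<le> s} x \<partial>lborel) = ennreal (V s)"
      by (simp add: emeasure_sublevel)
  qed
  also have "\<dots> = tail_integral m \<beta> (\<lambda>s. g s * V s)"
    unfolding tail_integral_def \<phi>_def using g V_nonneg
    by (intro nn_integral_cong) (auto simp: ennreal_mult[symmetric] mult_ac split: split_indicator)
  finally show ?thesis .
qed

lemma tail_integral_u_one:
  "indicator {x. 0 < f x} x * tail_integral (u x) \<beta> (\<lambda>_. 1) = ennreal (1/\<beta>) * ennreal (f x)"
proof (cases "0 < f x")
  case True
  then show ?thesis
    using tail_integral_one[OF u_pos \<beta>_pos] f_eq_u_powr \<beta>_pos by (simp add: ennreal_mult[symmetric])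
qed (use f_nonneg[of x] in simp)

lemma tail_integral_u_ln:
  "indicator {x. 0 < f x} x * tail_integral (u x) \<beta> (\<lambda>s. ln (s/m))
    = ennreal (1/\<beta>) * (ennreal (f x * ln (u x / m)) + ennreal (1/\<beta>) * ennreal (f x))"
proof (cases "0 < f x")
  case fx: True
  have u: "0 < u x" "m \<le> u x" using u_pos[OF fx] m_le_u[OF fx] by auto
  have "tail_integral (u x) \<beta> (\<lambda>s. ln (s/m))
      = ennreal (ln (u x / m) * u x powr (-\<beta>) / \<beta>) + ennreal (1/\<beta>) * tail_integral (u x) (\<beta>-1) (\<lambda>s. 1 / s)"
  proof (rule tail_integral_parts[OF u(1) \<beta>_pos])
    show "((\<lambda>s. ln (s/m)) has_real_derivative 1 / s) (at s)" if "u x \<le> s" for s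
      using that u m_pos by (auto intro!: derivative_eq_intros simp: field_simps)
  qed (use u m_pos in auto)
  also have "tail_integral (u x) (\<beta>-1) (\<lambda>s. 1 / s) = tail_integral (u x) \<beta> (\<lambda>_. 1)"
    using tail_integral_shift[OF u(1), of \<beta> "\<lambda>_. 1"] by simp
  finally show ?thesis
    using tail_integral_u_one[of x] fx f_eq_u_powr[OF fx] u m_pos \<beta>_pos
    by (simp add: distrib_left ennreal_mult[symmetric] mult.commute)
qed (use f_nonneg[of x] in simp)

lemma tail_integral_V: "tail_integral m \<beta> V = ennreal (1/\<beta>)"
proof -
  have "tail_integral m \<beta> V = (\<integral>\<^sup>+x. indicator {x. 0 < f x} x * tail_integral (u x) \<beta> (\<lambda>_. 1) \<partial>lborel)"
    using layer_cake[of "\<lambda>_. 1"] by simp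
  also have "\<dots> = ennreal (1/\<beta>)"
    by (simp add: tail_integral_u_one nn_integral_cmult nn_integral_f)
  finally show ?thesis .
qed

lemma tail_integral_ln_V:
  "tail_integral m \<beta> (\<lambda>s. ln (s/m) * V s)
    = ennreal (1/\<beta>) * ((\<integral>\<^sup>+x. ennreal (f x * ln (u x / m)) \<partial>lborel) + ennreal (1/\<beta>))"
proof -
  have "tail_integral m \<beta> (\<lambda>s. ln (s/m) * V s)
      = (\<integral>\<^sup>+x. indicator {x. 0 < f x} x * tail_integral (u x) \<beta> (\<lambda>s. ln (s/m)) \<partial>lborel)"
    using layer_cake[of "\<lambda>s. ln (s/m)"] m_pos by simp
  also have "\<dots> = ennreal (1/\<beta>) * ((\<integral>\<^sup>+x. ennreal (f x * ln (u x / m)) \<partial>lborel) + ennreal (1/\<beta>))"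
    by (simp add: tail_integral_u_ln nn_integral_add nn_integral_cmult nn_integral_f)
  finally show ?thesis .
qed

lemma ess_sup_norm_eq: "ess_sup_norm f = ereal (m powr (-\<beta>))"
proof (rule antisym)
  have f_le: "f x \<le> m powr (-\<beta>)" for x
  proof (cases "0 < f x")
    case True
    then have "u x powr (-\<beta>) \<le> m powr (-\<beta>)"
      using m_le_u m_pos \<beta>_pos by (intro powr_mono2') auto
    then show ?thesis using f_eq_u_powr[OF True] by simp
  qed (use f_nonneg[of x] in simp)
  show "ess_sup_norm f \<le> ereal (m powr (-\<beta>))"
    unfolding ess_sup_norm_def using f_le f_nonneg by (intro esssup_I AE_I2) auto
next
  have "ereal (s powr (-\<beta>)) \<le> ess_sup_norm f" if s: "m < s" for s
  proof -
    have "\<exists>x\<in>sublevel s. ereal \<bar>f x\<bar> \<le> ess_sup_norm f"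
    proof (rule ccontr)
      assume "\<not> ?thesis"
      then have "AE x in lborel. x \<notin> sublevel s"
        using esssup_AE[of "\<lambda>x. ereal \<bar>f x\<bar>" lborel] unfolding ess_sup_norm_def
        by (auto elim: eventually_mono)
      then have "emeasure lborel (sublevel s) = 0"
        by (subst (asm) AE_iff_null_sets[symmetric]) (auto simp: null_sets_def)
      then show False using V_pos[OF s] by (simp add: emeasure_sublevel)
    qed
    then obtain x where x: "0 < f x" "u x \<le> s" "ereal (f x) \<le> ess_sup_norm f"
      unfolding sublevel_def by auto
    have "s powr (-\<beta>) \<le> u x powr (-\<beta>)"
      using x u_pos[OF x(1)] \<beta>_pos by (intro powr_mono2') auto
    then have "ereal (s powr (-\<beta>)) \<le> ereal (f x)" using f_eq_u_powr[OF x(1)] by simp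
    then show ?thesis using x(3) by (rule order.trans)
  qed
  then show "ereal (m powr (-\<beta>)) \<le> ess_sup_norm f"
  proof (intro tendsto_upperbound)
    show "((\<lambda>s. ereal (s powr (-\<beta>))) \<longlongrightarrow> ereal (m powr (-\<beta>))) (at_right m)"
      using m_pos by (intro tendsto_intros) auto
    show "\<forall>\<^sub>F s in at_right m. ereal (s powr (-\<beta>)) \<le> ess_sup_norm f"
      using eventually_at_right_less by (rule eventually_mono) fact
  qed simp
qed

text \<open>As \<open>ln f = -\<beta> ln u\<close> on the support, \<open>h(f) = \<beta> \<integral> f ln (u/m) + \<beta> ln m\<close>, and
  \<open>\<beta> ln m = - ln \<parallel>f\<parallel>\<^sub>\<infinity>\<close>.\<close>
lemma diff_entropy_eq:
  assumes "(\<integral>\<^sup>+x. ennreal (f x * ln (u x / m)) \<partial>lborel) + ennreal (1/\<beta>) = ennreal r"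
  shows "diff_entropy f = - ln (real_of_ereal (ess_sup_norm f)) + \<beta> * r - 1"
proof -
  define g where "g x = f x * ln (u x / m)" for x
  have [measurable]: "g \<in> borel_measurable borel" unfolding g_def by measurable
  have g_nonneg: "0 \<le> g x" for x
    using f_nonneg[of x] m_le_u[of x] m_pos unfolding g_def by (cases "0 < f x") auto
  define G where "G = enn2real (\<integral>\<^sup>+x. ennreal (g x) \<partial>lborel)"
  have "(\<integral>\<^sup>+x. ennreal (g x) \<partial>lborel) \<noteq> \<infinity>"
    using assms unfolding g_def by (auto simp: ennreal_add_eq_top)
  then have G: "(\<integral>\<^sup>+x. ennreal (g x) \<partial>lborel) = ennreal G" "0 \<le> G"
    unfolding G_def by (simp_all add: less_top)
  then have g_int: "integrable lborel g" "integral\<^sup>L lborel g = G"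
    using nn_integral_eq_integrable[of g lborel G] g_nonneg by auto
  have f_int: "integrable lborel f" "integral\<^sup>L lborel f = 1"
    using nn_integral_eq_integrable[of f lborel 1] nn_integral_f f_nonneg by auto
  have "ennreal (G + 1/\<beta>) = ennreal r"
    using assms G \<beta>_pos unfolding g_def by (simp add: ennreal_plus)
  moreover have "0 < G + 1/\<beta>" using G(2) \<beta>_pos by (intro add_nonneg_pos) simp_all
  ultimately have r: "r = G + 1/\<beta>"
    by (metis ennreal_eq_0_iff ennreal_inj linorder_not_le order.strict_iff_not)
  have f_ln_f: "f x * ln (f x) = - \<beta> * g x - \<beta> * ln m * f x" for x
  proof (cases "0 < f x")
    case True
    then have ln_f: "ln (f x) = - \<beta> * ln (u x)" and ln_u: "ln (u x / m) = ln (u x) - ln m"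
      using f_eq_u_powr[OF True] u_pos[OF True] m_pos by (simp_all add: ln_div ln_powr)
    show ?thesis unfolding g_def ln_f ln_u by (simp add: algebra_simps)
  qed (use f_nonneg[of x] in \<open>simp add: g_def\<close>)
  have "diff_entropy f = \<beta> * G + \<beta> * ln m"
    unfolding diff_entropy_def f_ln_f using g_int f_int by simp
  also have "\<beta> * ln m = - ln (real_of_ereal (ess_sup_norm f))"
    unfolding ess_sup_norm_eq using m_pos by simp
  finally show ?thesis using r \<beta>_pos by (simp add: field_simps)
qed

theorem diff_entropy_le:
  "diff_entropy f \<le> - ln (real_of_ereal (ess_sup_norm f)) + \<beta> * (\<Sum>i=1..DIM('a). 1 / (\<beta> - real i))"
proof -
  define c where "c = (\<Sum>i\<le>DIM('a). 1 / (\<beta> - real i))"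
  define I where "I = (\<integral>\<^sup>+x. ennreal (f x * ln (u x / m)) \<partial>lborel) + ennreal (1/\<beta>)"
  have "ennreal (1/\<beta>) * I \<le> ennreal c * ennreal (1/\<beta>)"
    using tail_integral_ln_le[OF m_pos dim_less _ V_nonneg V_ratio] borel_measurable_mono[OF V_mono]
    unfolding I_def c_def tail_integral_ln_V tail_integral_V by simp
  then have I_le: "I \<le> ennreal c"
    using \<beta>_pos ennreal_mult_le_mult_iff[of "ennreal (1/\<beta>)" I "ennreal c"] by (simp add: mult.commute)
  define r where "r = enn2real I"
  have c: "0 \<le> c" unfolding c_def using dim_less by (intro sum_nonneg) auto
  have r: "I = ennreal r" "r \<le> c"
    using I_le c unfolding r_def by (auto simp: enn2real_leI le_less_trans)
  have "diff_entropy f = - ln (real_of_ereal (ess_sup_norm f)) + \<beta> * r - 1"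
    using r(1) unfolding I_def by (rule diff_entropy_eq)
  also have "\<dots> \<le> - ln (real_of_ereal (ess_sup_norm f)) + \<beta> * c - 1"
    using r \<beta>_pos by simp
  finally show ?thesis unfolding c_def using mult_sum_inverse_diff[of \<beta> "DIM('a)"] \<beta>_pos by linarith
qed

theorem diff_entropy_eq_if_V_power:
  assumes V_eq: "\<And>s. m \<le> s \<Longrightarrow> V s = K * (s-m)^DIM('a)"
  shows "diff_entropy f = - ln (real_of_ereal (ess_sup_norm f)) + \<beta> * (\<Sum>i=1..DIM('a). 1 / (\<beta> - real i))"
proof -
  define c where "c = (\<Sum>i\<le>DIM('a). 1 / (\<beta> - real i))"
  have K: "0 \<le> K" using V_eq[of "m+1"] V_nonneg[of "m+1"] by simp
  have "tail_integral m \<beta> (\<lambda>s. ln (s/m) * V s) = ennreal K * tail_integral m \<beta> (\<lambda>s. (s-m)^DIM('a) * ln (s/m))"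
    using V_eq K by (subst tail_integral_cmult[symmetric]) (auto intro!: tail_integral_cong)
  also have "\<dots> = ennreal c * (ennreal K * tail_integral m \<beta> (\<lambda>s. (s-m)^DIM('a)))"
    unfolding tail_integral_power_ln[OF m_pos dim_less] c_def by (simp add: mult_ac)
  also have "ennreal K * tail_integral m \<beta> (\<lambda>s. (s-m)^DIM('a)) = tail_integral m \<beta> V"
    using V_eq K by (subst tail_integral_cmult[symmetric]) (auto intro!: tail_integral_cong)
  finally have "ennreal (1/\<beta>) * ((\<integral>\<^sup>+x. ennreal (f x * ln (u x / m)) \<partial>lborel) + ennreal (1/\<beta>))
      = ennreal (1/\<beta>) * ennreal c"
    unfolding tail_integral_ln_V tail_integral_V by (simp add: mult.commute)
  then have "(\<integral>\<^sup>+x. ennreal (f x * ln (u x / m)) \<partial>lborel) + ennreal (1/\<beta>) = ennreal c"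
    using \<beta>_pos by (simp add: ennreal_mult_cancel_left)
  then have "diff_entropy f = - ln (real_of_ereal (ess_sup_norm f)) + \<beta> * c - 1"
    by (rule diff_entropy_eq)
  then show ?thesis unfolding c_def using mult_sum_inverse_diff \<beta>_pos by simp
qed

end

section \<open>The Pareto density\<close>

definition pos_orthant :: "(real^'n::finite) set" where
  "pos_orthant = {x. \<forall>i. 0 < x $ i}"

definition corner_simplex :: "(real^'n::finite) set" where
  "corner_simplex = {x \<in> pos_orthant. (\<Sum>i\<in>UNIV. x $ i) \<le> 1}"

lemma open_pos_orthant: "open pos_orthant"
proof -
  have "pos_orthant = (\<Inter>i\<in>UNIV. {x::real^'n. 0 < x $ i})" unfolding pos_orthant_def by auto
  also have "open \<dots>" by (intro open_INT ballI open_Collect_less continuous_intros) simp_all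
  finally show ?thesis .
qed

lemma pos_orthant_measurable [measurable]: "pos_orthant \<in> sets borel"
  using open_pos_orthant by (rule borel_open)

lemma corner_simplex_measurable [measurable]: "corner_simplex \<in> sets borel"
  unfolding corner_simplex_def by measurable

lemma sum_pos_orthant: "x \<in> pos_orthant \<Longrightarrow> 0 < (\<Sum>i\<in>UNIV. x $ i)"
  unfolding pos_orthant_def by (intro sum_pos) auto

lemma convex_pos_orthant: "convex pos_orthant"
  unfolding convex_alt pos_orthant_def
proof (clarsimp)
  fix x y :: "real^'n" and l :: real and i
  assume x: "\<forall>i. 0 < x $ i" and y: "\<forall>i. 0 < y $ i" and l: "0 \<le> l" "l \<le> 1"
  show "0 < (1-l) * x $ i + l * y $ i"
  proof (cases "l = 1")
    case False
    then have "0 < (1-l) * x $ i" using x l by simp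
    moreover have "0 \<le> l * y $ i" using y l by (simp add: less_imp_le)
    ultimately show ?thesis by simp
  qed (use y in simp)
qed

lemma emeasure_corner_simplex_finite: "emeasure lborel (corner_simplex :: (real^'n::finite) set) < \<infinity>"
proof (rule emeasure_bounded_finite)
  show "bounded (corner_simplex :: (real^'n) set)"
    unfolding bounded_iff
  proof (intro exI ballI)
    fix x :: "real^'n" assume x: "x \<in> corner_simplex"
    have "norm x \<le> (\<Sum>i\<in>UNIV. \<bar>x $ i\<bar>)" by (rule norm_le_l1_cart)
    also have "\<dots> = (\<Sum>i\<in>UNIV. x $ i)"
      using x unfolding corner_simplex_def pos_orthant_def by (intro sum.cong) (auto simp: abs_of_pos)
    also have "\<dots> \<le> 1" using x unfolding corner_simplex_def by simp
    finally show "norm x \<le> 1" .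
  qed
qed

lemma emeasure_corner_simplex_pos: "emeasure lborel (corner_simplex :: (real^'n::finite) set) > 0"
proof -
  define r :: real where "r = 1 / (2 * real CARD('n))"
  have r: "r > 0" unfolding r_def by simp
  have "ball (\<chi> i. r) r \<subseteq> (corner_simplex :: (real^'n) set)"
  proof
    fix x :: "real^'n" assume "x \<in> ball (\<chi> i. r) r"
    then have x: "\<bar>x $ i - r\<bar> < r" for i
      using component_le_norm_cart[of "x - (\<chi> i. r)" i] by (simp add: dist_norm norm_minus_commute)
    have "x $ i \<le> 2 * r" for i using x[of i] by (simp add: abs_less_iff)
    then have "(\<Sum>i\<in>UNIV. x $ i) \<le> (\<Sum>i\<in>(UNIV::'n set). 2 * r)"
      by (intro sum_mono)
    also have "\<dots> = 1" unfolding r_def by simp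
    finally show "x \<in> corner_simplex"
      using x unfolding corner_simplex_def pos_orthant_def by (simp add: abs_less_iff)
  qed
  then have "emeasure lborel (ball (\<chi> i. r :: real^'n) r) \<le> emeasure lborel (corner_simplex :: (real^'n) set)"
    by (intro emeasure_mono) simp_all
  moreover have "emeasure lborel (ball (\<chi> i. r :: real^'n) r) \<noteq> 0"
    using content_ball_pos[OF r, of "\<chi> i. r :: real^'n"] by (auto simp: measure_def)
  ultimately show ?thesis by (metis not_gr_zero le_zero_eq)
qed

lemma emeasure_pareto_sublevel:
  assumes "a \<le> t"
  shows "emeasure lborel {x :: real^'n::finite. x \<in> pos_orthant \<and> a + (\<Sum>i\<in>UNIV. x $ i) \<le> t}
    = ennreal ((t-a) ^ CARD('n)) * emeasure lborel (corner_simplex :: (real^'n) set)"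
proof (cases "t = a")
  case True
  then have empty: "{x :: real^'n. x \<in> pos_orthant \<and> a + (\<Sum>i\<in>UNIV. x $ i) \<le> t} = {}"
    using sum_pos_orthant by fastforce
  show ?thesis unfolding empty using True by (simp add: power_0_left)
next
  case False
  with assms have c: "t - a > 0" by simp
  have "a + (t-a) * S \<le> t \<longleftrightarrow> S \<le> 1" for S
    using mult_le_cancel_left_pos[OF c, of S 1] by (simp add: algebra_simps)
  then have "(\<lambda>x. 0 + (t-a) *\<^sub>R x) -` {x :: real^'n. x \<in> pos_orthant \<and> a + (\<Sum>i\<in>UNIV. x $ i) \<le> t} = corner_simplex"
    using c by (auto simp: corner_simplex_def pos_orthant_def sum_distrib_left[symmetric] zero_less_mult_iff)
  then show ?thesis
    using emeasure_lborel_affine_vimage[of "{x :: real^'n. x \<in> pos_orthant \<and> a + (\<Sum>i\<in>UNIV. x $ i) \<le> t}" "t-a" 0] c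
    by simp
qed

lemma pareto_unnorm_eq: "pareto_unnorm a \<beta> x = indicator pos_orthant x * (a + (\<Sum>i\<in>UNIV. x $ i)) powr (-\<beta>)"
  unfolding pareto_unnorm_def pos_orthant_def by (simp split: split_indicator)

lemma pareto_unnorm_measurable [measurable]: "pareto_unnorm a \<beta> \<in> borel_measurable borel"
  unfolding pareto_unnorm_eq[abs_def] by measurable

text \<open>Write \<open>(a + \<Sum>x)^(-\<beta>)\<close> as the integral of \<open>\<beta> s^(-\<beta>-1)\<close> over \<open>[a + \<Sum>x, \<infinity>)\<close> and swap the
  integrals; the sublevel sets of \<open>a + \<Sum>x\<close> in the orthant are dilated copies of the corner simplex.\<close>
lemma nn_integral_pareto_unnorm:
  fixes a \<beta> :: real
  assumes a: "a > 0" and b: "\<beta> > 0"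
  shows "(\<integral>\<^sup>+x. ennreal (pareto_unnorm a \<beta> (x :: real^'n::finite)) \<partial>lborel)
       = ennreal \<beta> * emeasure lborel (corner_simplex :: (real^'n) set) * tail_integral a \<beta> (\<lambda>s. (s-a)^CARD('n))"
proof -
  define w where "w x = a + (\<Sum>i\<in>UNIV. x $ i)" for x :: "real^'n"
  define \<phi> where "\<phi> s = ennreal (\<beta> * s powr (-\<beta>-1)) * indicator {a..} s" for s :: real
  have [measurable]: "w \<in> borel_measurable borel" "\<phi> \<in> borel_measurable borel"
    unfolding w_def \<phi>_def by measurable
  have "(\<integral>\<^sup>+x. ennreal (pareto_unnorm a \<beta> (x :: real^'n)) \<partial>lborel)
      = (\<integral>\<^sup>+x. indicator pos_orthant x * (\<integral>\<^sup>+s. \<phi> s * indicator {w x..} s \<partial>lborel) \<partial>lborel)"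
  proof (intro nn_integral_cong)
    fix x :: "real^'n"
    show "ennreal (pareto_unnorm a \<beta> x) = indicator pos_orthant x * (\<integral>\<^sup>+s. \<phi> s * indicator {w x..} s \<partial>lborel)"
    proof (cases "x \<in> pos_orthant")
      case True
      then have w: "a < w x" unfolding w_def using sum_pos_orthant by fastforce
      have "(\<integral>\<^sup>+s. \<phi> s * indicator {w x..} s \<partial>lborel) = ennreal \<beta> * tail_integral (w x) \<beta> (\<lambda>_. 1)"
        unfolding \<phi>_def tail_integral_def using w b
        by (subst nn_integral_cmult[symmetric]) (auto intro!: nn_integral_cong simp: ennreal_mult split: split_indicator)
      also have "\<dots> = ennreal (w x powr (-\<beta>))"
        using tail_integral_one[of "w x" \<beta>] w a b by (simp add: ennreal_mult[symmetric])
      finally show ?thesis using True by (simp add: pareto_unnorm_eq w_def)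
    qed (simp add: pareto_unnorm_eq)
  qed
  also have "\<dots> = (\<integral>\<^sup>+s. \<phi> s * (\<integral>\<^sup>+x. indicator pos_orthant x * indicator {x. w x \<le> s} x \<partial>lborel) \<partial>lborel)"
    by (rule nn_integral_sublevel_swap) measurable
  also have "\<dots> = (\<integral>\<^sup>+s. ennreal \<beta> * emeasure lborel (corner_simplex :: (real^'n) set)
      * (ennreal (s powr (-\<beta>-1) * (s-a)^CARD('n)) * indicator {a..} s) \<partial>lborel)"
  proof (intro nn_integral_cong)
    fix s :: real
    have [measurable]: "{x :: real^'n. x \<in> pos_orthant \<and> w x \<le> s} \<in> sets borel" by measurable
    have "(\<integral>\<^sup>+x. indicator pos_orthant x * indicator {x. w x \<le> s} x \<partial>lborel)
        = (\<integral>\<^sup>+x. indicator {x :: real^'n. x \<in> pos_orthant \<and> w x \<le> s} x \<partial>lborel)"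
      by (intro nn_integral_cong) (simp split: split_indicator)
    then have "(\<integral>\<^sup>+x. indicator pos_orthant x * indicator {x. w x \<le> s} x \<partial>lborel)
        = emeasure lborel {x :: real^'n. x \<in> pos_orthant \<and> w x \<le> s}"
      by simp
    then show "\<phi> s * (\<integral>\<^sup>+x. indicator pos_orthant x * indicator {x. w x \<le> s} x \<partial>lborel)
      = ennreal \<beta> * emeasure lborel (corner_simplex :: (real^'n) set)
      * (ennreal (s powr (-\<beta>-1) * (s-a)^CARD('n)) * indicator {a..} s)"
      using emeasure_pareto_sublevel[where 'n='n, of a s] b unfolding \<phi>_def w_def
      by (cases "a \<le> s") (simp_all add: ennreal_mult' mult_ac)
  qed
  also have "\<dots> = ennreal \<beta> * emeasure lborel (corner_simplex :: (real^'n) set) * tail_integral a \<beta> (\<lambda>s. (s-a)^CARD('n))"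
    unfolding tail_integral_def by (rule nn_integral_cmult) measurable
  finally show ?thesis .
qed

locale pareto =
  fixes a \<beta> :: real and n_type :: "'n::finite itself"
  assumes a_pos: "a > 0" and card_less: "real CARD('n) < \<beta>"
begin

lemma \<beta>_pos: "\<beta> > 0"
  using card_less by (metis of_nat_0_le_iff order.strict_trans1)

definition Z :: real where "Z = pareto_Z a \<beta> TYPE('n)"

definition simplex_volume :: real where
  "simplex_volume = enn2real (emeasure lborel (corner_simplex :: (real^'n) set))"

lemma simplex_volume: "simplex_volume > 0" "emeasure lborel (corner_simplex :: (real^'n) set) = ennreal simplex_volume"
  using emeasure_corner_simplex_finite[where 'n='n] emeasure_corner_simplex_pos[where 'n='n]
  unfolding simplex_volume_def by (auto simp: enn2real_positive_iff less_top)

lemma nn_integral_pareto_unnorm_eq_Z: "(\<integral>\<^sup>+x. ennreal (pareto_unnorm a \<beta> (x :: real^'n)) \<partial>lborel) = ennreal Z" and Z_pos: "Z > 0"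
proof -
  define C where "C = fact CARD('n) * a powr (real CARD('n) - \<beta>) / (\<Prod>i\<le>CARD('n). (\<beta> - real i))"
  have "(\<Prod>i\<le>CARD('n). (\<beta> - real i)) > 0"
    using card_less by (intro prod_pos) auto
  then have C: "C > 0" unfolding C_def using a_pos by simp
  have nn: "(\<integral>\<^sup>+x. ennreal (pareto_unnorm a \<beta> (x :: real^'n)) \<partial>lborel) = ennreal (\<beta> * simplex_volume * C)"
    using nn_integral_pareto_unnorm[OF a_pos \<beta>_pos, where 'n='n] tail_integral_power[OF a_pos card_less]
      simplex_volume \<beta>_pos C
    unfolding C_def[symmetric] by (simp add: ennreal_mult)
  have "0 \<le> pareto_unnorm a \<beta> x" for x :: "real^'n"
    by (simp add: pareto_unnorm_eq)
  then have "Z = \<beta> * simplex_volume * C"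
    using nn_integral_eq_integrable[of "pareto_unnorm a \<beta> :: real^'n \<Rightarrow> real" lborel "\<beta> * simplex_volume * C"]
      nn \<beta>_pos simplex_volume C
    unfolding Z_def pareto_Z_def by simp
  then show "(\<integral>\<^sup>+x. ennreal (pareto_unnorm a \<beta> (x :: real^'n)) \<partial>lborel) = ennreal Z" "Z > 0"
    using nn \<beta>_pos simplex_volume C by simp_all
qed

definition q :: real where "q = Z powr (1/\<beta>)"

lemma q_pos: "q > 0"
  unfolding q_def using Z_pos by simp

text \<open>Absorbing the normalising constant into \<open>q\<close> makes \<open>pareto_density a \<beta> powr (-1/\<beta>)\<close> affine on the
  orthant.\<close>
lemma pareto_density_eq:
  "pareto_density a \<beta> (x :: real^'n) = indicator pos_orthant x * (q * (a + (\<Sum>i\<in>UNIV. x $ i))) powr (-\<beta>)"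
proof (cases "x \<in> pos_orthant")
  case True
  then have w: "0 < a + (\<Sum>i\<in>UNIV. x $ i)" using sum_pos_orthant[OF True] a_pos by simp
  have "q powr (-\<beta>) = 1 / Z"
    unfolding q_def using Z_pos \<beta>_pos by (simp add: powr_powr powr_minus_divide)
  then show ?thesis
    using True w q_pos unfolding pareto_density_def pareto_unnorm_eq Z_def[symmetric] by (simp add: powr_mult)
qed (simp add: pareto_density_def pareto_unnorm_eq)

lemma pareto_density_pos_iff: "0 < pareto_density a \<beta> (x :: real^'n) \<longleftrightarrow> x \<in> pos_orthant"
proof (cases "x \<in> pos_orthant")
  case True
  then have "0 < a + (\<Sum>i\<in>UNIV. x $ i)" using sum_pos_orthant[of x] a_pos by simp
  then show ?thesis using True q_pos unfolding pareto_density_eq by simp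
qed (simp add: pareto_density_eq)

lemma pareto_density_nonneg: "0 \<le> pareto_density a \<beta> (x :: real^'n)"
  unfolding pareto_density_eq by simp

lemma pareto_is_density: "is_density (pareto_density a \<beta> :: real^'n \<Rightarrow> real)"
  unfolding is_density_def
proof (intro conjI allI)
  show "(pareto_density a \<beta> :: real^'n \<Rightarrow> real) \<in> borel_measurable lborel"
    unfolding pareto_density_eq[abs_def] by measurable
  show "0 \<le> pareto_density a \<beta> x" for x :: "real^'n"
    by (rule pareto_density_nonneg)
  have "(\<integral>\<^sup>+x. ennreal (pareto_density a \<beta> (x :: real^'n)) \<partial>lborel)
      = (\<integral>\<^sup>+x. ennreal (1/Z) * ennreal (pareto_unnorm a \<beta> (x :: real^'n)) \<partial>lborel)"
    unfolding pareto_density_def Z_def[symmetric] using Z_pos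
    by (intro nn_integral_cong) (simp add: ennreal_mult'[symmetric])
  also have "\<dots> = 1"
    using Z_pos by (simp add: nn_integral_cmult nn_integral_pareto_unnorm_eq_Z ennreal_mult[symmetric])
  finally show "(\<integral>\<^sup>+x. ennreal (pareto_density a \<beta> (x :: real^'n)) \<partial>lborel) = 1" .
qed

lemma pareto_neg_inv_concave: "neg_inv_concave \<beta> (pareto_density a \<beta> :: real^'n \<Rightarrow> real)"
  unfolding neg_inv_concave_def
proof (intro conjI allI impI)
  fix x :: "real^'n" show "0 \<le> pareto_density a \<beta> x"
    by (rule pareto_density_nonneg)
next
  fix x y :: "real^'n" and l :: real
  assume xy: "0 < pareto_density a \<beta> x * pareto_density a \<beta> y" and l: "l \<in> {0..1}"
  define w where "w z = q * (a + (\<Sum>i\<in>UNIV. z $ i))" for z :: "real^'n"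
  have w_pos: "0 < w z" if "z \<in> pos_orthant" for z
    unfolding w_def using sum_pos_orthant[OF that] a_pos q_pos by simp
  have x: "x \<in> pos_orthant" and y: "y \<in> pos_orthant"
    using xy pareto_density_nonneg[of x] pareto_density_nonneg[of y]
    unfolding pareto_density_pos_iff[symmetric] by (auto simp: zero_less_mult_iff)
  have z: "(1-l) *\<^sub>R x + l *\<^sub>R y \<in> pos_orthant"
    using convex_pos_orthant x y l unfolding convex_alt by auto
  have "(\<Sum>i\<in>UNIV. ((1-l) *\<^sub>R x + l *\<^sub>R y) $ i) = (1-l) * (\<Sum>i\<in>UNIV. x $ i) + l * (\<Sum>i\<in>UNIV. y $ i)"
    by (simp add: sum.distrib sum_distrib_left)
  then have w_comb: "w ((1-l) *\<^sub>R x + l *\<^sub>R y) = (1-l) * w x + l * w y"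
    unfolding w_def by (simp only:) (simp add: algebra_simps)
  have u: "pareto_density a \<beta> z powr (-1/\<beta>) = w z" if "z \<in> pos_orthant" for z
    using w_pos[OF that] that \<beta>_pos unfolding pareto_density_eq w_def by (simp add: powr_powr)
  have "pareto_density a \<beta> ((1-l) *\<^sub>R x + l *\<^sub>R y) = w ((1-l) *\<^sub>R x + l *\<^sub>R y) powr (-\<beta>)"
    using z unfolding pareto_density_eq w_def by simp
  then show "((1-l) * pareto_density a \<beta> x powr (-1/\<beta>) + l * pareto_density a \<beta> y powr (-1/\<beta>)) powr (-\<beta>)
      \<le> pareto_density a \<beta> ((1-l) *\<^sub>R x + l *\<^sub>R y)"
    unfolding u[OF x] u[OF y] w_comb by simp
qed

end

sublocale pareto \<subseteq> P: neg_inv_concave_density \<beta> "pareto_density a \<beta> :: real^'n \<Rightarrow> real"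
  using pareto_is_density pareto_neg_inv_concave card_less by unfold_locales auto

context pareto
begin

lemma P_u_eq: "x \<in> pos_orthant \<Longrightarrow> P.u x = q * (a + (\<Sum>i\<in>UNIV. x $ i))"
  using sum_pos_orthant[of x] a_pos q_pos \<beta>_pos unfolding P.u_def pareto_density_eq by (simp add: powr_powr)

lemma P_m_eq: "P.m = q * a"
proof (rule antisym)
  show "q * a \<le> P.m"
    unfolding P.m_def
  proof (rule cInf_greatest)
    show "P.u ` {x. 0 < pareto_density a \<beta> x} \<noteq> {}" using P.support_nonempty by auto
  next
    fix v assume "v \<in> P.u ` {x. 0 < pareto_density a \<beta> x}"
    then obtain x where x: "x \<in> pos_orthant" "v = P.u x" unfolding pareto_density_pos_iff by auto
    then show "q * a \<le> v" using sum_pos_orthant[OF x(1)] q_pos P_u_eq by simp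
  qed
next
  show "P.m \<le> q * a"
  proof (rule field_le_epsilon)
    fix \<epsilon> :: real assume \<epsilon>: "0 < \<epsilon>"
    define x :: "real^'n" where "x = (\<chi> i. \<epsilon> / (q * real CARD('n)))"
    have x: "x \<in> pos_orthant" unfolding x_def pos_orthant_def using \<epsilon> q_pos by simp
    have "(\<Sum>i\<in>UNIV. x $ i) = \<epsilon> / q" unfolding x_def using q_pos by simp
    then have "P.u x = q * a + \<epsilon>" using P_u_eq[OF x] q_pos by (simp add: distrib_left)
    moreover have "P.m \<le> P.u x" using P.m_le_u pareto_density_pos_iff x by blast
    ultimately show "P.m \<le> q * a + \<epsilon>" by simp
  qed
qed

lemma P_V_eq: "P.m \<le> s \<Longrightarrow> P.V s = simplex_volume / q ^ CARD('n) * (s - P.m) ^ DIM(real^'n)"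
proof -
  assume s: "P.m \<le> s"
  have "P.sublevel s = {x. x \<in> pos_orthant \<and> a + (\<Sum>i\<in>UNIV. x $ i) \<le> s / q}"
    unfolding P.sublevel_def pareto_density_pos_iff using P_u_eq q_pos by (auto simp: pos_le_divide_eq mult.commute)
  moreover have "a \<le> s / q" using s P_m_eq q_pos by (simp add: pos_le_divide_eq mult.commute)
  ultimately have "emeasure lborel (P.sublevel s) = ennreal ((s / q - a) ^ CARD('n) * simplex_volume)"
    using emeasure_pareto_sublevel[where 'n='n] simplex_volume by (simp add: ennreal_mult)
  moreover have "(s / q - a) ^ CARD('n) * simplex_volume = simplex_volume / q ^ CARD('n) * (s - P.m) ^ CARD('n)"
    unfolding P_m_eq using q_pos by (simp add: diff_divide_distrib[symmetric] power_divide field_simps)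
  moreover have "0 \<le> (s / q - a) ^ CARD('n) * simplex_volume"
    using \<open>a \<le> s / q\<close> simplex_volume by simp
  ultimately show ?thesis using P.emeasure_sublevel[of s] P.V_nonneg[of s] by simp
qed

theorem pareto_diff_entropy:
  "diff_entropy (pareto_density a \<beta> :: real^'n \<Rightarrow> real)
    = - ln (real_of_ereal (ess_sup_norm (pareto_density a \<beta> :: real^'n \<Rightarrow> real)))
      + \<beta> * (\<Sum>i=1..CARD('n). 1 / (\<beta> - real i))"
  using P.diff_entropy_eq_if_V_power[OF P_V_eq] by simp

end

theorem corollary4p8:
  fixes \<beta> :: real
  assumes "\<beta> > real CARD('n::finite)"
  shows "(\<forall>f :: real^'n \<Rightarrow> real. is_density f \<and> neg_inv_concave \<beta> f \<longrightarrow>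
           diff_entropy f \<le> - ln (real_of_ereal (ess_sup_norm f))
                            + \<beta> * (\<Sum>i=1..CARD('n). 1 / (\<beta> - real i))) \<and>
         (\<forall>a > 0. diff_entropy (pareto_density a \<beta> :: real^'n \<Rightarrow> real)
           = - ln (real_of_ereal (ess_sup_norm (pareto_density a \<beta> :: real^'n \<Rightarrow> real)))
             + \<beta> * (\<Sum>i=1..CARD('n). 1 / (\<beta> - real i)))"
proof (intro conjI allI impI)
  fix f :: "real^'n \<Rightarrow> real"
  assume "is_density f \<and> neg_inv_concave \<beta> f"
  then interpret neg_inv_concave_density \<beta> f
    using assms by unfold_locales auto
  show "diff_entropy f \<le> - ln (real_of_ereal (ess_sup_norm f)) + \<beta> * (\<Sum>i=1..CARD('n). 1 / (\<beta> - real i))"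
    using diff_entropy_le by simp
next
  fix a :: real
  assume "a > 0"
  then interpret pareto a \<beta> "TYPE('n)"
    using assms by unfold_locales
  show "diff_entropy (pareto_density a \<beta> :: real^'n \<Rightarrow> real)
      = - ln (real_of_ereal (ess_sup_norm (pareto_density a \<beta> :: real^'n \<Rightarrow> real)))
        + \<beta> * (\<Sum>i=1..CARD('n). 1 / (\<beta> - real i))"
    by (rule pareto_diff_entropy)
qed

end
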